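(* Among the graphs in $\mathcal{C}_3$, exactly $F_0$ and $F_1(5)$ are comparability graphs; that is, $F_0$ and $F_1(5)$ are comparability graphs, while no even $k$-sun ($k\ge4$ even), no $F_1(k)$ with odd $k\ge7$, and no $F_2(k)$ with odd $k\ge5$ is a comparability graph.
   Context: A comparability graph is a graph admitting a transitive orientation. The graphs (split graphs with clique $C$, independent set $I$, and listed neighbourhoods): $F_0$: $C=\{0,c_1,c_2,c_3,c_4\}$, $I=\{a_1,a_2,a_3\}$, $N(a_1)=\{0,c_2,c_3\}$, $N(a_2)=\{0,c_3,c_4\}$, $N(a_3)=\{0,c_1,c_4\}$. Even $k$-sun ($k\ge4$ even): $C=\{c_1,\dots,c_k\}$, $I=\{a_1,\dots,a_k\}$, $N(a_i)=\{c_i,c_{i+1}\}$ ($1\le i\le k-1$), $N(a_k)=\{c_1,c_k\}$. $F_1(k)$ ($k\ge5$ odd): $C=\{c_1,\dots,c_{k-1}\}$, $I=\{b_1,b_2,a_1,\dots,a_{k-2}\}$, $N(b_1)=\{c_1,\dots,c_{k-2}\}$, $N(b_2)=\{c_2,\dots,c_{k-1}\}$, $N(a_i)=\{c_i,c_{i+1}\}$ ($1\le i\le k-2$). $F_2(k)$ ($k\ge5$ odd): $C=\{c_1,\dots,c_k\}$, $I=\{b,a_1,\dots,a_{k-1}\}$, $N(b)=\{c_2,\dots,c_{k-1}\}$, $N(a_i)=\{c_i,c_{i+1}\}$ ($1\le i\le k-1$). $\mathcal{C}_3$ is the family of all these graphs. *)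

theory Defs
  imports Main
begin

type_synonym 'v graph = "'v set \<times> 'v set set"

definition verts :: "'v graph \<Rightarrow> 'v set" where "verts G = fst G"
definition edges :: "'v graph \<Rightarrow> 'v set set" where "edges G = snd G"

definition transitive_orientation :: "'v graph \<Rightarrow> ('v \<times> 'v) set \<Rightarrow> bool" where
  "transitive_orientation G R \<longleftrightarrow>
     (\<forall>u v. (u, v) \<in> R \<longrightarrow> {u, v} \<in> edges G) \<and>
     (\<forall>u v. {u, v} \<in> edges G \<longrightarrow> u \<noteq> v \<longrightarrow> ((u, v) \<in> R \<longleftrightarrow> (v, u) \<notin> R)) \<and>
     trans R"

definition comparability_graph :: "'v graph \<Rightarrow> bool" where
  "comparability_graph G \<longleftrightarrow> (\<exists>R. transitive_orientation G R)"

datatype vtx = Zero | C nat | A nat | B nat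

definition split_graph :: "vtx set \<Rightarrow> vtx set \<Rightarrow> (vtx \<Rightarrow> vtx set) \<Rightarrow> vtx graph" where
  "split_graph Cl I N =
     (Cl \<union> I,
      {{x, y} | x y. x \<in> Cl \<and> y \<in> Cl \<and> x \<noteq> y} \<union> {{a, c} | a c. a \<in> I \<and> c \<in> N a})"

definition F0 :: "vtx graph" where
  "F0 = split_graph {Zero, C 1, C 2, C 3, C 4} {A 1, A 2, A 3}
     (\<lambda>v. if v = A 1 then {Zero, C 2, C 3}
          else if v = A 2 then {Zero, C 3, C 4}
          else {Zero, C 1, C 4})"

definition even_sun :: "nat \<Rightarrow> vtx graph" where
  "even_sun k = split_graph (C ` {1..k}) (A ` {1..k})
     (\<lambda>v. case v of A i \<Rightarrow> if i < k then {C i, C (i + 1)} else {C 1, C k} | _ \<Rightarrow> {})"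

definition F1 :: "nat \<Rightarrow> vtx graph" where
  "F1 k = split_graph (C ` {1..k - 1}) ({B 1, B 2} \<union> A ` {1..k - 2})
     (\<lambda>v. case v of
        B j \<Rightarrow> if j = 1 then C ` {1..k - 2} else C ` {2..k - 1}
      | A i \<Rightarrow> {C i, C (i + 1)}
      | _ \<Rightarrow> {})"

definition F2 :: "nat \<Rightarrow> vtx graph" where
  "F2 k = split_graph (C ` {1..k}) ({B 0} \<union> A ` {1..k - 1})
     (\<lambda>v. case v of
        B _ \<Rightarrow> C ` {2..k - 1}
      | A i \<Rightarrow> {C i, C (i + 1)}
      | _ \<Rightarrow> {})"

end

theory Submission
  imports Defs
begin

text \<open>
  \<^emph>\<open>Positive cases.\<close> Orienting every edge upwards in a suitable linear order of the
  vertices gives a transitive orientation of \<open>F\<^sub>0\<close> and of \<open>F\<^sub>1(5)\<close>.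

  \<^emph>\<open>Negative cases.\<close> In a transitive orientation, two edges \<open>xy\<close> and \<open>xz\<close> with \<open>y\<close>
  and \<open>z\<close> nonadjacent are either both directed out of \<open>x\<close> or both into \<open>x\<close>. Each
  negative graph contains clique vertices \<open>c\<^sub>1, \<dots>, c\<^sub>4\<close> and independent vertices
  \<open>a\<^sub>0, \<dots>, a\<^sub>3\<close> such that, by chains of such forcings, each vertex of the triangle
  \<open>c\<^sub>1c\<^sub>2c\<^sub>3\<close> is a source or a sink of the triangle. But an oriented triangle always
  has a vertex with one incoming and one outgoing edge.
\<close>

lemma split_graph_edge_iff:
  "{u, v} \<in> edges (split_graph Cl I N) \<longleftrightarrow>
     (u \<in> Cl \<and> v \<in> Cl \<and> u \<noteq> v) \<or> (u \<in> I \<and> v \<in> N u) \<or> (v \<in> I \<and> u \<in> N v)"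
  unfolding split_graph_def edges_def by (auto simp: doubleton_eq_iff)

lemma comparability_graph_by_rank:
  fixes rank :: "'v \<Rightarrow> nat"
  assumes rank_inj: "\<And>u v. {u, v} \<in> edges G \<Longrightarrow> u \<noteq> v \<Longrightarrow> rank u \<noteq> rank v"
    and rank_trans: "\<And>u v w. {u, v} \<in> edges G \<Longrightarrow> {v, w} \<in> edges G \<Longrightarrow>
        rank u < rank v \<Longrightarrow> rank v < rank w \<Longrightarrow> {u, w} \<in> edges G"
  shows "comparability_graph G"
proof -
  let ?R = "{(u, v). {u, v} \<in> edges G \<and> rank u < rank v}"
  have "transitive_orientation G ?R"
    unfolding transitive_orientation_def
  proof (intro conjI allI impI)
    fix u v assume "{u, v} \<in> edges G" "u \<noteq> v"
    then show "(u, v) \<in> ?R \<longleftrightarrow> (v, u) \<notin> ?R"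
      using rank_inj[of u v] by (auto simp: insert_commute)
  next
    show "trans ?R"
      by (auto intro!: transI intro: rank_trans)
  qed auto
  then show ?thesis
    unfolding comparability_graph_def by blast
qed

lemma transitive_orientation_forced:
  assumes "transitive_orientation G R" "{x, y} \<in> edges G" "{x, z} \<in> edges G"
    "{y, z} \<notin> edges G" "x \<noteq> y" "x \<noteq> z"
  shows "(x, y) \<in> R \<longleftrightarrow> (x, z) \<in> R"
proof -
  have orient: "\<And>u v. {u, v} \<in> edges G \<Longrightarrow> u \<noteq> v \<Longrightarrow> (u, v) \<in> R \<longleftrightarrow> (v, u) \<notin> R"
    and in_edges: "\<And>u v. (u, v) \<in> R \<Longrightarrow> {u, v} \<in> edges G" and "trans R"
    using assms(1) unfolding transitive_orientation_def by blast+
  have "(y, z) \<notin> R" "(z, y) \<notin> R"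
    using in_edges[of y z] in_edges[of z y] assms(4) by (auto simp: insert_commute)
  then show ?thesis
    using orient[OF assms(2,5)] orient[OF assms(3,6)] \<open>trans R\<close> unfolding trans_def by blast
qed

lemma transitive_orientation_triangle_has_transit_vertex:
  assumes "transitive_orientation G R" "{x, y} \<in> edges G" "{x, z} \<in> edges G" "{y, z} \<in> edges G"
    "x \<noteq> y" "x \<noteq> z" "y \<noteq> z"
  shows "\<not> (((x, y) \<in> R \<longleftrightarrow> (x, z) \<in> R) \<and> ((y, x) \<in> R \<longleftrightarrow> (y, z) \<in> R) \<and>
            ((z, x) \<in> R \<longleftrightarrow> (z, y) \<in> R))"
proof -
  have orient: "\<And>u v. {u, v} \<in> edges G \<Longrightarrow> u \<noteq> v \<Longrightarrow> (u, v) \<in> R \<longleftrightarrow> (v, u) \<notin> R"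
    using assms(1) unfolding transitive_orientation_def by blast
  show ?thesis
    using orient[OF assms(2,5)] orient[OF assms(3,6)] orient[OF assms(4,7)] by blast
qed

lemma split_graph_orientation_forced:
  assumes "transitive_orientation (split_graph Cl I N) R" "Cl \<inter> I = {}"
    "a \<in> I" "c \<in> Cl" "c \<in> N a" "d \<in> Cl" "d \<notin> N a" "d \<noteq> c"
  shows "(c, a) \<in> R \<longleftrightarrow> (c, d) \<in> R"
  using assms by (intro transitive_orientation_forced) (auto simp: split_graph_edge_iff)

lemma split_graph_with_ears_not_comparability:
  assumes disjoint: "Cl \<inter> I = {}"
    and clique: "{c1, c2, c3, c4} \<subseteq> Cl" "distinct [c1, c2, c3, c4]"
    and independent: "{a0, a1, a2, a3} \<subseteq> I"
    and ears: "c1 \<in> N a0" "c2 \<notin> N a0" "c3 \<notin> N a0"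
      "N a1 = {c1, c2}" "N a2 = {c2, c3}" "N a3 = {c3, c4}"
  shows "\<not> comparability_graph (split_graph Cl I N)"
proof
  assume "comparability_graph (split_graph Cl I N)"
  then obtain R where R: "transitive_orientation (split_graph Cl I N) R"
    unfolding comparability_graph_def by blast
  have forced: "(c, a) \<in> R \<longleftrightarrow> (c, d) \<in> R"
    if "a \<in> {a0, a1, a2, a3}" "c \<in> {c1, c2, c3, c4}" "d \<in> {c1, c2, c3, c4}"
      "c \<in> N a" "d \<notin> N a" "d \<noteq> c" for a c d
    using split_graph_orientation_forced[OF R disjoint, of a c d] that clique(1) independent
    by blast
  have "(c1, c2) \<in> R \<longleftrightarrow> (c1, c3) \<in> R"
    using forced[of a0 c1 c2] forced[of a0 c1 c3] clique(2) ears by auto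
  moreover have "(c2, c1) \<in> R \<longleftrightarrow> (c2, c3) \<in> R"
    using forced[of a2 c2 c1] forced[of a2 c2 c4] forced[of a1 c2 c4] forced[of a1 c2 c3]
      clique(2) ears by auto
  moreover have "(c3, c1) \<in> R \<longleftrightarrow> (c3, c2) \<in> R"
    using forced[of a3 c3 c1] forced[of a3 c3 c2] clique(2) ears by auto
  moreover have "{c1, c2} \<in> edges (split_graph Cl I N)" "{c1, c3} \<in> edges (split_graph Cl I N)"
    "{c2, c3} \<in> edges (split_graph Cl I N)"
    using clique by (auto simp: split_graph_edge_iff)
  ultimately show False
    using transitive_orientation_triangle_has_transit_vertex[OF R] clique(2) by auto
qed

fun position :: "'a list \<Rightarrow> 'a \<Rightarrow> nat" where
  "position [] x = 0"
| "position (y # ys) x = (if x = y then 0 else Suc (position ys x))"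

lemma comparability_F0: "comparability_graph F0"
  by (rule comparability_graph_by_rank[where rank =
        "position [Zero, C 4, C 1, A 1, C 2, A 2, C 3, A 3]"];
      unfold F0_def split_graph_edge_iff; auto split: if_splits)

lemma F1_5_eq:
  "F1 5 = split_graph {C 1, C 2, C 3, C 4} ({B 1, B 2} \<union> {A 1, A 2, A 3})
     (\<lambda>v. case v of
        B j \<Rightarrow> if j = 1 then {C 1, C 2, C 3} else {C 2, C 3, C 4}
      | A i \<Rightarrow> {C i, C (i + 1)}
      | _ \<Rightarrow> {})"
proof -
  have images: "C ` {1..5 - 1} = {C 1, C 2, C 3, C 4}" "C ` {1..5 - 2} = {C 1, C 2, C 3}"
    "C ` {2..5 - 1} = {C 2, C 3, C 4}" "A ` {1..5 - 2} = {A 1, A 2, A 3}"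
    by (auto simp: image_iff)
  show ?thesis
    unfolding F1_def images ..
qed

lemma comparability_F1_5: "comparability_graph (F1 5)"
  by (rule comparability_graph_by_rank[where rank =
        "position [C 3, C 4, A 3, B 2, B 1, A 2, A 1, C 1, C 2]"];
      unfold F1_5_eq split_graph_edge_iff; auto split: if_splits)

lemma even_sun_not_comparability:
  assumes "k \<ge> 4"
  shows "\<not> comparability_graph (even_sun k)"
  unfolding even_sun_def using assms
  by (intro split_graph_with_ears_not_comparability
        [of _ _ "C 1" "C 2" "C 3" "C 4" "A k" "A 1" "A 2" "A 3"]) auto

lemma F1_not_comparability:
  assumes "k \<ge> 6"
  shows "\<not> comparability_graph (F1 k)"
  unfolding F1_def using assms
  by (intro split_graph_with_ears_not_comparability
        [of _ _ "C 2" "C 3" "C 4" "C 5" "A 1" "A 2" "A 3" "A 4"]) auto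

lemma F2_not_comparability:
  assumes "k \<ge> 5"
  shows "\<not> comparability_graph (F2 k)"
  unfolding F2_def using assms
  by (intro split_graph_with_ears_not_comparability
        [of _ _ "C 2" "C 3" "C 4" "C 5" "A 1" "A 2" "A 3" "A 4"]) auto

theorem theorem7:
  shows "comparability_graph F0 \<and> comparability_graph (F1 5) \<and>
    (\<forall>k. k \<ge> 4 \<and> even k \<longrightarrow> \<not> comparability_graph (even_sun k)) \<and>
    (\<forall>k. k \<ge> 7 \<and> odd k \<longrightarrow> \<not> comparability_graph (F1 k)) \<and>
    (\<forall>k. k \<ge> 5 \<and> odd k \<longrightarrow> \<not> comparability_graph (F2 k))"
  using comparability_F0 comparability_F1_5 even_sun_not_comparability F1_not_comparability
    F2_not_comparability by auto

end
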